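(* Let $d$ be a positive integer and let $\omega_N\subset\mathbb{S}^{d-1}$ be a set of $N$ distinct points on the unit sphere of $\mathbb{R}^d$. Assume that for any three distinct points $x,y,z\in\omega_N$, $$\langle x,y\rangle\langle x,z\rangle\langle y,z\rangle\le 0.$$ Then $N\le 2d$. Moreover, $N=2d$ holds only if $\omega_N$ is nearly orthogonal.
   Context: $\langle\cdot,\cdot\rangle$ is the standard Euclidean inner product and $\mathbb{S}^{d-1}=\{x\in\mathbb{R}^d:\|x\|=1\}$. A set of nonzero vectors in $\mathbb{R}^d$ is called nearly orthogonal if, among any three distinct vectors of the set, at least two are orthogonal. *)

theory Defs
  imports "HOL-Analysis.Analysis"
begin

definition nearly_orthogonal :: "'a::real_inner set \<Rightarrow> bool" where
  "nearly_orthogonal S \<longleftrightarrow> (\<forall>v\<in>S. v \<noteq> 0) \<and>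
     (\<forall>x\<in>S. \<forall>y\<in>S. \<forall>z\<in>S. x \<noteq> y \<and> x \<noteq> z \<and> y \<noteq> z \<longrightarrow>
        x \<bullet> y = 0 \<or> x \<bullet> z = 0 \<or> y \<bullet> z = 0)"

end

theory Submission
  imports Defs
begin

text \<open>For a unit vector \<open>x\<close> of the configuration let \<open>s\<close> be the sum of \<open>(x \<bullet> y) y\<close>
over the other points \<open>y\<close>. Expanding \<open>0 \<le> (x - s) \<bullet> (x - s)\<close> bounds the sum of
\<open>(x \<bullet> y)\<^sup>2\<close> over all \<open>y\<close> by \<open>2\<close> plus the sum of the triple products
\<open>(x \<bullet> y) (x \<bullet> z) (y \<bullet> z)\<close>, which is nonpositive by hypothesis; summing over \<open>x\<close>, the
frame potential (the sum of all \<open>(x \<bullet> y)\<^sup>2\<close>) is at most \<open>2 N\<close>. On the other hand it is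
the squared Frobenius norm of the frame operator, whose trace is \<open>N\<close>, so Cauchy-Schwarz on
the diagonal bounds it below by \<open>N\<^sup>2 / d\<close>. Hence \<open>N \<le> 2 d\<close>, and if \<open>N = 2 d\<close> all
triple products vanish.\<close>

lemma sum_nonpos_eq_0_iff:
  fixes f :: "'b \<Rightarrow> 'c::ordered_ab_group_add"
  assumes "finite A" and "\<And>x. x \<in> A \<Longrightarrow> f x \<le> 0"
  shows "sum f A = 0 \<longleftrightarrow> (\<forall>x\<in>A. f x = 0)"
  using sum_nonneg_eq_0_iff[of A "\<lambda>x. - f x"] assms by (simp add: sum_negf)

definition triple_sum :: "'a::real_inner \<Rightarrow> 'a set \<Rightarrow> real" where
  "triple_sum x A = (\<Sum>y\<in>A. \<Sum>z\<in>A - {y}. (x \<bullet> y) * (x \<bullet> z) * (y \<bullet> z))"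

lemma triple_sum_nonpos:
  assumes "\<And>y z. y \<in> A \<Longrightarrow> z \<in> A \<Longrightarrow> y \<noteq> z \<Longrightarrow> (x \<bullet> y) * (x \<bullet> z) * (y \<bullet> z) \<le> 0"
  shows "triple_sum x A \<le> 0"
  unfolding triple_sum_def using assms by (auto intro!: sum_nonpos)

lemma triple_sum_eq_0_iff:
  assumes "finite A"
    and "\<And>y z. y \<in> A \<Longrightarrow> z \<in> A \<Longrightarrow> y \<noteq> z \<Longrightarrow> (x \<bullet> y) * (x \<bullet> z) * (y \<bullet> z) \<le> 0"
  shows "triple_sum x A = 0 \<longleftrightarrow>
    (\<forall>y\<in>A. \<forall>z\<in>A - {y}. (x \<bullet> y) * (x \<bullet> z) * (y \<bullet> z) = 0)"
proof -
  have "triple_sum x A = 0 \<longleftrightarrow>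
      (\<forall>y\<in>A. (\<Sum>z\<in>A - {y}. (x \<bullet> y) * (x \<bullet> z) * (y \<bullet> z)) = 0)"
    unfolding triple_sum_def using assms by (intro sum_nonpos_eq_0_iff) (auto intro!: sum_nonpos)
  also have "\<dots> \<longleftrightarrow> (\<forall>y\<in>A. \<forall>z\<in>A - {y}. (x \<bullet> y) * (x \<bullet> z) * (y \<bullet> z) = 0)"
  proof (rule ball_cong[OF refl])
    fix y assume "y \<in> A"
    then show "(\<Sum>z\<in>A - {y}. (x \<bullet> y) * (x \<bullet> z) * (y \<bullet> z)) = 0 \<longleftrightarrow>
        (\<forall>z\<in>A - {y}. (x \<bullet> y) * (x \<bullet> z) * (y \<bullet> z) = 0)"
      using assms by (intro sum_nonpos_eq_0_iff) auto
  qed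
  finally show ?thesis .
qed

lemma sum_inner_square_le_triple_sum:
  fixes x :: "'a::real_inner"
  assumes "finite A" and unit: "\<And>y. y \<in> A \<Longrightarrow> y \<bullet> y = 1"
  shows "(\<Sum>y\<in>A. (x \<bullet> y)\<^sup>2) \<le> x \<bullet> x + triple_sum x A"
proof -
  define s where "s = (\<Sum>y\<in>A. (x \<bullet> y) *\<^sub>R y)"
  have x_s: "x \<bullet> s = (\<Sum>y\<in>A. (x \<bullet> y)\<^sup>2)"
    by (simp add: s_def inner_sum_right power2_eq_square)
  have split_diagonal: "(\<Sum>z\<in>A. (x \<bullet> y) * (x \<bullet> z) * (y \<bullet> z))
      = (x \<bullet> y)\<^sup>2 + (\<Sum>z\<in>A - {y}. (x \<bullet> y) * (x \<bullet> z) * (y \<bullet> z))" if "y \<in> A" for y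
    using sum.remove[OF \<open>finite A\<close> that, of "\<lambda>z. (x \<bullet> y) * (x \<bullet> z) * (y \<bullet> z)"] unit[OF that]
    by (simp add: power2_eq_square)
  have "s \<bullet> s = (\<Sum>y\<in>A. \<Sum>z\<in>A. (x \<bullet> y) * (x \<bullet> z) * (y \<bullet> z))"
    by (simp add: s_def inner_sum_right inner_sum_left sum_distrib_left mult.assoc
        mult.left_commute inner_commute[of _ y for y])
  also have "\<dots> = (\<Sum>y\<in>A. (x \<bullet> y)\<^sup>2) + triple_sum x A"
    by (simp add: split_diagonal sum.distrib triple_sum_def)
  finally have s_s: "s \<bullet> s = (\<Sum>y\<in>A. (x \<bullet> y)\<^sup>2) + triple_sum x A" .
  have "0 \<le> (x - s) \<bullet> (x - s)" by simp
  also have "\<dots> = x \<bullet> x - 2 * (x \<bullet> s) + s \<bullet> s"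
    by (simp add: inner_diff_left inner_diff_right inner_commute)
  finally show ?thesis using x_s s_s by simp
qed

lemma frame_potential_le_triple_sums:
  fixes S :: "'a::real_inner set"
  assumes "finite S" and unit: "\<And>x. x \<in> S \<Longrightarrow> x \<bullet> x = 1"
  shows "(\<Sum>x\<in>S. \<Sum>y\<in>S. (x \<bullet> y)\<^sup>2) \<le> 2 * card S + (\<Sum>x\<in>S. triple_sum x (S - {x}))"
proof -
  have "(\<Sum>y\<in>S. (x \<bullet> y)\<^sup>2) \<le> 2 + triple_sum x (S - {x})" if "x \<in> S" for x
  proof -
    have "(\<Sum>y\<in>S. (x \<bullet> y)\<^sup>2) = (x \<bullet> x)\<^sup>2 + (\<Sum>y\<in>S - {x}. (x \<bullet> y)\<^sup>2)"
      using sum.remove[OF \<open>finite S\<close> that] by simp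
    then show ?thesis
      using sum_inner_square_le_triple_sum[of "S - {x}" x] assms unit[OF that] by simp
  qed
  then have "(\<Sum>x\<in>S. \<Sum>y\<in>S. (x \<bullet> y)\<^sup>2) \<le> (\<Sum>x\<in>S. 2 + triple_sum x (S - {x}))"
    by (rule sum_mono)
  then show ?thesis by (simp add: sum.distrib)
qed

lemma frame_potential_eq_sum_Basis:
  fixes S :: "'a::euclidean_space set"
  shows "(\<Sum>x\<in>S. \<Sum>y\<in>S. (x \<bullet> y)\<^sup>2)
    = (\<Sum>a\<in>Basis. \<Sum>b\<in>Basis. (\<Sum>x\<in>S. (x \<bullet> a) * (x \<bullet> b))\<^sup>2)"
proof -
  have "(x \<bullet> y)\<^sup>2 = (\<Sum>a\<in>Basis. \<Sum>b\<in>Basis. ((x \<bullet> a) * (x \<bullet> b)) * ((y \<bullet> a) * (y \<bullet> b)))"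
    for x y :: 'a
    by (simp add: power2_eq_square euclidean_inner[of x y] sum_product ac_simps)
  then have "(\<Sum>x\<in>S. \<Sum>y\<in>S. (x \<bullet> y)\<^sup>2)
      = (\<Sum>x\<in>S. \<Sum>y\<in>S. \<Sum>a\<in>Basis. \<Sum>b\<in>Basis. ((x \<bullet> a) * (x \<bullet> b)) * ((y \<bullet> a) * (y \<bullet> b)))"
    by simp
  also have "\<dots> = (\<Sum>a\<in>Basis. \<Sum>b\<in>Basis. \<Sum>x\<in>S. \<Sum>y\<in>S. ((x \<bullet> a) * (x \<bullet> b)) * ((y \<bullet> a) * (y \<bullet> b)))"
    by (simp only: sum.swap[where A = S and B = Basis])
  also have "\<dots> = (\<Sum>a\<in>Basis. \<Sum>b\<in>Basis. (\<Sum>x\<in>S. (x \<bullet> a) * (x \<bullet> b))\<^sup>2)"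
    by (simp add: power2_eq_square sum_product)
  finally show ?thesis .
qed

lemma frame_potential_lower_bound:
  fixes S :: "'a::euclidean_space set"
  shows "(\<Sum>x\<in>S. x \<bullet> x)\<^sup>2 \<le> DIM('a) * (\<Sum>x\<in>S. \<Sum>y\<in>S. (x \<bullet> y)\<^sup>2)"
proof -
  define M where "M a b = (\<Sum>x\<in>S. (x \<bullet> a) * (x \<bullet> b))" for a b
  have "(\<Sum>x\<in>S. x \<bullet> x) = (\<Sum>a\<in>Basis. M a a)"
    unfolding M_def by (subst euclidean_inner) (rule sum.swap)
  also have "(\<Sum>a\<in>Basis. M a a)\<^sup>2 \<le> DIM('a) * (\<Sum>a\<in>Basis. (M a a)\<^sup>2)"
    using sum_squared_le_sum_of_squares[of "\<lambda>a. M a a" Basis] by (simp add: mult.commute)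
  also have "\<dots> \<le> DIM('a) * (\<Sum>a\<in>Basis. \<Sum>b\<in>Basis. (M a b)\<^sup>2)"
    by (intro mult_left_mono sum_mono member_le_sum[where f = "\<lambda>b. (M _ b)\<^sup>2"]) auto
  also have "\<dots> = DIM('a) * (\<Sum>x\<in>S. \<Sum>y\<in>S. (x \<bullet> y)\<^sup>2)"
    by (simp add: M_def frame_potential_eq_sum_Basis)
  finally show ?thesis .
qed

lemma card_squared_le_DIM_triple_sums:
  fixes S :: "'a::euclidean_space set"
  assumes "finite S" and unit: "\<And>x. x \<in> S \<Longrightarrow> x \<bullet> x = 1"
  shows "(real (card S))\<^sup>2 \<le> DIM('a) * (2 * card S + (\<Sum>x\<in>S. triple_sum x (S - {x})))"
proof -
  have "(\<Sum>x\<in>S. x \<bullet> x) = card S"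
    using unit by simp
  then have "(real (card S))\<^sup>2 \<le> DIM('a) * (\<Sum>x\<in>S. \<Sum>y\<in>S. (x \<bullet> y)\<^sup>2)"
    using frame_potential_lower_bound[of S] by simp
  also have "\<dots> \<le> DIM('a) * (2 * card S + (\<Sum>x\<in>S. triple_sum x (S - {x})))"
    using frame_potential_le_triple_sums[OF assms] by (intro mult_left_mono) auto
  finally show ?thesis .
qed

lemma nearly_orthogonal_if_triple_sums_eq_0:
  fixes S :: "'a::real_inner set"
  assumes "finite S" and "0 \<notin> S"
    and nonpos: "\<And>x y z. x \<in> S \<Longrightarrow> y \<in> S \<Longrightarrow> z \<in> S \<Longrightarrow> x \<noteq> y \<Longrightarrow> x \<noteq> z \<Longrightarrow> y \<noteq> z \<Longrightarrow>
        (x \<bullet> y) * (x \<bullet> z) * (y \<bullet> z) \<le> 0"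
    and "(\<Sum>x\<in>S. triple_sum x (S - {x})) = 0"
  shows "nearly_orthogonal S"
proof -
  have "\<forall>x\<in>S. triple_sum x (S - {x}) = 0"
    using assms by (subst sum_nonpos_eq_0_iff[symmetric]) (auto intro: triple_sum_nonpos)
  then have "(x \<bullet> y) * (x \<bullet> z) * (y \<bullet> z) = 0"
    if "x \<in> S" "y \<in> S" "z \<in> S" "x \<noteq> y" "x \<noteq> z" "y \<noteq> z" for x y z
    using that triple_sum_eq_0_iff[of "S - {x}" x] assms(1) nonpos by auto
  then show ?thesis
    using \<open>0 \<notin> S\<close> unfolding nearly_orthogonal_def by fastforce
qed

lemma le_double_if_square_le:
  fixes N d T :: real
  assumes bound: "N\<^sup>2 \<le> d * (2 * N + T)" and "T \<le> 0" and "d > 0"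
  shows "N \<le> 2 * d \<and> (N = 2 * d \<longrightarrow> T = 0)"
proof (intro conjI impI)
  show "N \<le> 2 * d"
  proof (rule ccontr)
    assume "\<not> N \<le> 2 * d"
    then have "2 * d * N < N * N"
      using \<open>d > 0\<close> by (intro mult_strict_right_mono) auto
    also have "N * N \<le> d * (2 * N)"
      using bound \<open>T \<le> 0\<close> \<open>d > 0\<close> by (simp add: power2_eq_square) (smt (verit) mult_left_mono)
    finally show False by simp
  qed
next
  assume "N = 2 * d"
  then have "d * (2 * N) \<le> d * (2 * N + T)"
    using bound by (simp add: power2_eq_square)
  then show "T = 0"
    using \<open>T \<le> 0\<close> \<open>d > 0\<close> by simp
qed

theorem theorem3p1:
  fixes \<omega> :: "(real ^ 'd) set"
  assumes "finite \<omega>"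
    and "\<omega> \<subseteq> sphere 0 1"
    and "\<And>x y z. x \<in> \<omega> \<Longrightarrow> y \<in> \<omega> \<Longrightarrow> z \<in> \<omega> \<Longrightarrow> x \<noteq> y \<Longrightarrow> x \<noteq> z \<Longrightarrow> y \<noteq> z \<Longrightarrow>
           (x \<bullet> y) * (x \<bullet> z) * (y \<bullet> z) \<le> 0"
  shows "card \<omega> \<le> 2 * CARD('d) \<and>
         (card \<omega> = 2 * CARD('d) \<longrightarrow> nearly_orthogonal \<omega>)"
proof -
  define N where "N = real (card \<omega>)"
  define d where "d = real CARD('d)"
  define T where "T = (\<Sum>x\<in>\<omega>. triple_sum x (\<omega> - {x}))"
  have unit: "x \<bullet> x = 1" if "x \<in> \<omega>" for x
    using assms(2) that by (auto simp: norm_eq_1[symmetric])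
  have "T \<le> 0"
    unfolding T_def using assms(3) by (intro sum_nonpos triple_sum_nonpos) auto
  have bound: "N\<^sup>2 \<le> d * (2 * N + T)"
    using card_squared_le_DIM_triple_sums[OF assms(1) unit] by (simp add: N_def d_def T_def)
  have "d > 0" by (simp add: d_def)
  have "N \<le> 2 * d" and "N = 2 * d \<Longrightarrow> T = 0"
    using le_double_if_square_le[OF bound \<open>T \<le> 0\<close> \<open>d > 0\<close>] by auto
  moreover have "0 \<notin> \<omega>"
    using unit by force
  ultimately show ?thesis
    using nearly_orthogonal_if_triple_sums_eq_0[OF assms(1) _ assms(3)]
    by (simp add: N_def d_def T_def)
qed

end
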